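(* Let $k \ge 2$ be an integer. If $G$ is a connected twin-free graph with $n$ vertices and $i_{\max}(G) = k$, then $n \le 2^{k-1}+k-2$. Furthermore, equality holds only if the graph $G$ is formed by taking a clique $K_{k-1}$ and adding, for every non-empty vertex subset $S$ of this clique, a vertex whose neighbourhood is precisely $S$.
   Context: $i_{\max}(G)$ denotes the number of maximal independent sets of $G$. A graph is twin-free if no two vertices have the same open neighbourhood. *)

theory Defs
  imports Main
begin

definition simple_graph :: "'a set \<Rightarrow> ('a \<Rightarrow> 'a \<Rightarrow> bool) \<Rightarrow> bool" where
  "simple_graph V E \<longleftrightarrow> finite V \<and> (\<forall>u v. E u v \<longrightarrow> u \<in> V \<and> v \<in> V)
     \<and> (\<forall>u v. E u v \<longrightarrow> E v u) \<and> (\<forall>v. \<not> E v v)"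

definition nbhd :: "'a set \<Rightarrow> ('a \<Rightarrow> 'a \<Rightarrow> bool) \<Rightarrow> 'a \<Rightarrow> 'a set" where
  "nbhd V E v = {w \<in> V. E v w}"

definition connected_graph :: "'a set \<Rightarrow> ('a \<Rightarrow> 'a \<Rightarrow> bool) \<Rightarrow> bool" where
  "connected_graph V E \<longleftrightarrow> V \<noteq> {} \<and> (\<forall>u\<in>V. \<forall>v\<in>V. E\<^sup>*\<^sup>* u v)"

definition twin_free :: "'a set \<Rightarrow> ('a \<Rightarrow> 'a \<Rightarrow> bool) \<Rightarrow> bool" where
  "twin_free V E \<longleftrightarrow> (\<forall>u\<in>V. \<forall>v\<in>V. u \<noteq> v \<longrightarrow> nbhd V E u \<noteq> nbhd V E v)"

definition independent :: "'a set \<Rightarrow> ('a \<Rightarrow> 'a \<Rightarrow> bool) \<Rightarrow> 'a set \<Rightarrow> bool" where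
  "independent V E S \<longleftrightarrow> S \<subseteq> V \<and> (\<forall>u\<in>S. \<forall>v\<in>S. \<not> E u v)"

definition maximal_independent :: "'a set \<Rightarrow> ('a \<Rightarrow> 'a \<Rightarrow> bool) \<Rightarrow> 'a set \<Rightarrow> bool" where
  "maximal_independent V E S \<longleftrightarrow> independent V E S \<and>
     (\<forall>T. independent V E T \<and> S \<subseteq> T \<longrightarrow> T = S)"

definition i_max :: "'a set \<Rightarrow> ('a \<Rightarrow> 'a \<Rightarrow> bool) \<Rightarrow> nat" where
  "i_max V E = card {S. maximal_independent V E S}"

definition clique :: "'a set \<Rightarrow> ('a \<Rightarrow> 'a \<Rightarrow> bool) \<Rightarrow> 'a set \<Rightarrow> bool" where
  "clique V E C \<longleftrightarrow> C \<subseteq> V \<and> (\<forall>u\<in>C. \<forall>v\<in>C. u \<noteq> v \<longrightarrow> E u v)"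

definition clique_plus_subsets :: "nat \<Rightarrow> 'a set \<Rightarrow> ('a \<Rightarrow> 'a \<Rightarrow> bool) \<Rightarrow> bool" where
  "clique_plus_subsets k V E \<longleftrightarrow> (\<exists>C. clique V E C \<and> card C = k - 1 \<and>
     bij_betw (nbhd V E) (V - C) {S. S \<subseteq> C \<and> S \<noteq> {}})"

end

(*
  Map every vertex v to its star, the set of maximal independent sets containing v. Two
  vertices are adjacent iff their stars are disjoint, so twin-freeness makes the map
  injective, and since every independent set extends to a maximal one the stars form a
  Helly family of nonempty proper subsets of a k-element set U (properness uses that a
  connected graph with k >= 2 has no isolated vertex).

  For such a family F let P be the members whose complement is also a member. The members
  of F and the complements of the members of F - P are distinct, so
  card F + card (F - P) <= 2^k - 2; removing a minimal complementary pair from P merges two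
  point stars of P, so card P + 2 <= 2k. Adding gives card F <= 2^(k-1) + k - 2. In the
  equality case every set or its complement lies in F and P separates points; Helly then
  forces a point x such that F consists of the singletons {j}, j ~= x, and of all proper
  sets containing x. Read back through the stars, the former vertices form the clique
  K_(k-1) and the latter have each nonempty subset of it as neighbourhood.
*)
theory Submission
  imports Defs
begin

definition helly :: "'b set set \<Rightarrow> bool" where
  "helly F \<longleftrightarrow> (\<forall>Q\<subseteq>F. Q \<noteq> {} \<longrightarrow> (\<forall>A\<in>Q. \<forall>B\<in>Q. A \<inter> B \<noteq> {}) \<longrightarrow> \<Inter>Q \<noteq> {})"

lemma helly_subset: "helly F \<Longrightarrow> G \<subseteq> F \<Longrightarrow> helly G"
  unfolding helly_def by (meson order_trans)

lemma hellyE: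
  assumes "helly F" "Q \<subseteq> F" "Q \<noteq> {}" "\<And>A B. A \<in> Q \<Longrightarrow> B \<in> Q \<Longrightarrow> A \<inter> B \<noteq> {}"
  obtains y where "\<And>A. A \<in> Q \<Longrightarrow> y \<in> A"
proof -
  have "\<Inter>Q \<noteq> {}" using assms unfolding helly_def by blast
  then show ?thesis using that by blast
qed

lemma helly_insertE:
  assumes "helly F" "W \<subseteq> F" "Y \<in> F" "Y \<noteq> {}"
    and "\<And>A B. A \<in> W \<Longrightarrow> B \<in> W \<Longrightarrow> A \<inter> B \<noteq> {}" and "\<And>A. A \<in> W \<Longrightarrow> A \<inter> Y \<noteq> {}"
  obtains y where "y \<in> Y" "\<And>A. A \<in> W \<Longrightarrow> y \<in> A"
proof -
  have "A \<inter> B \<noteq> {}" if "A \<in> insert Y W" "B \<in> insert Y W" for A B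
    using that assms(4-6) by (auto simp: Int_commute)
  then obtain y where "\<And>A. A \<in> insert Y W \<Longrightarrow> y \<in> A"
    using hellyE[OF assms(1), of "insert Y W"] assms(2,3) by blast
  then show ?thesis using that by blast
qed

lemma helly_triple:
  assumes "helly F" "X \<in> F" "Y \<in> F" "Z \<in> F" "X \<inter> Y \<noteq> {}" "X \<inter> Z \<noteq> {}" "Y \<inter> Z \<noteq> {}"
  shows "X \<inter> Y \<inter> Z \<noteq> {}"
proof -
  have "A \<inter> B \<noteq> {}" if "A \<in> {X, Y, Z}" "B \<in> {X, Y, Z}" for A B
    using that assms(5-7) by auto
  then obtain y where "\<And>A. A \<in> {X, Y, Z} \<Longrightarrow> y \<in> A"
    using hellyE[OF assms(1), of "{X, Y, Z}"] assms(2-4) by blast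
  then show ?thesis by blast
qed

definition point_star :: "'b set set \<Rightarrow> 'b \<Rightarrow> 'b set set" where
  "point_star F i = {A \<in> F. i \<in> A}"

lemma card_image_less_if_merges:
  assumes "finite S" "a \<in> S" "b \<in> S" "a \<noteq> b" "g a = g b"
  shows "card (g ` S) < card S"
proof -
  have "\<not> inj_on g S" using assms(2-5) unfolding inj_on_def by blast
  then show ?thesis using assms(1) card_image_le inj_on_iff_eq_card le_neq_implies_less by metis
qed

text \<open>Deleting a \<open>\<subseteq>\<close>-minimal pair \<open>B, U - B\<close> merges two point stars: Helly applied to
  \<open>U - B\<close> and the remaining members through a point \<open>i \<in> B\<close> gives a point \<open>j \<notin> B\<close>
  lying in exactly the same remaining members as \<open>i\<close>.\<close>
lemma minimal_pair_removal_merges_point_stars: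
  assumes "\<forall>A\<in>P. A \<subseteq> U \<and> A \<noteq> {}" "\<forall>A\<in>P. U - A \<in> P" "helly P"
    and B: "B \<in> P" "\<forall>A\<in>P. A \<subseteq> B \<longrightarrow> A = B"
  obtains i j where "i \<in> U" "j \<in> U" "point_star P i \<noteq> point_star P j"
    "point_star (P - {B, U - B}) i = point_star (P - {B, U - B}) j"
proof -
  define P' where "P' = P - {B, U - B}"
  obtain i where i: "i \<in> B" using B assms(1) by blast
  have "B \<subseteq> U" using B assms(1) by blast
  have in_P': "A \<in> P" "A \<subseteq> U" "A \<noteq> B" "A \<noteq> U - B" if "A \<in> P'" for A
    using that assms(1) unfolding P'_def by auto
  have meets: "A \<inter> (U - B) \<noteq> {}" if "A \<in> P'" for A
  proof
    assume "A \<inter> (U - B) = {}"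
    then have "A \<subseteq> B" using in_P'[OF that] by blast
    then show False using B(2) in_P'[OF that] by blast
  qed
  obtain j where j: "j \<in> U - B" and ij: "\<And>A. A \<in> point_star P' i \<Longrightarrow> j \<in> A"
  proof (rule helly_insertE[OF assms(3), of "point_star P' i" "U - B"])
    show "point_star P' i \<subseteq> P" "U - B \<in> P" unfolding P'_def point_star_def using B assms(2) by auto
    show "U - B \<noteq> {}" using B assms(1,2) by blast
  qed (use i meets in \<open>auto simp: point_star_def\<close>)
  have ji: "i \<in> A" if "A \<in> P'" "j \<in> A" for A
  proof (rule ccontr)
    assume "i \<notin> A"
    have "U - A \<noteq> B" "U - A \<noteq> U - B" using in_P'[OF that(1)] \<open>B \<subseteq> U\<close> by auto
    then have "U - A \<in> point_star P' i"
      using \<open>i \<notin> A\<close> i \<open>B \<subseteq> U\<close> in_P'[OF that(1)] assms(2)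
      unfolding P'_def point_star_def by blast
    then show False using ij that(2) by blast
  qed
  show ?thesis
  proof (rule that[of i j, folded P'_def])
    show "i \<in> U" "j \<in> U" using i j \<open>B \<subseteq> U\<close> by auto
    show "point_star P i \<noteq> point_star P j" using B i j unfolding point_star_def by blast
    show "point_star P' i = point_star P' j" using ij ji unfolding point_star_def by blast
  qed
qed

lemma complement_closed_helly_card_le:
  assumes "finite U" "U \<noteq> {}" "finite P" "\<forall>A\<in>P. A \<subseteq> U \<and> A \<noteq> {}" "\<forall>A\<in>P. U - A \<in> P"
    "helly P"
  shows "card P + 2 \<le> 2 * card (point_star P ` U)"
  using assms(3-)
proof (induction "card P" arbitrary: P rule: less_induct)
  case less
  show ?case
  proof (cases "P = {}")
    case True
    then show ?thesis using assms(2) by (simp add: point_star_def image_constant_conv)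
  next
    case False
    then obtain B where B: "B \<in> P" "\<forall>A\<in>P. A \<subseteq> B \<longrightarrow> A = B"
      using finite_has_minimal[OF less.prems(1)] by blast
    define P' where "P' = P - {B, U - B}"
    have "B \<noteq> U - B" using B less.prems(2) by blast
    then have pair: "{B, U - B} \<subseteq> P" "card {B, U - B} = 2" using B less.prems(3) by auto
    then have card_P': "card P' + 2 = card P"
      using card_mono[OF less.prems(1) pair(1)] card_Diff_subset[OF _ pair(1)] less.prems(1)
      unfolding P'_def by (simp add: finite_subset)
    have "card P' + 2 \<le> 2 * card (point_star P' ` U)"
    proof (rule less.hyps)
      show "\<forall>A\<in>P'. U - A \<in> P'"
      proof
        fix A assume "A \<in> P'"
        then have "A \<in> P" "A \<subseteq> U" "A \<noteq> B" "A \<noteq> U - B"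
          using less.prems(2) unfolding P'_def by auto
        moreover have "B \<subseteq> U" using B less.prems(2) by blast
        ultimately show "U - A \<in> P'" using less.prems(3) unfolding P'_def by blast
      qed
    qed (use card_P' less.prems in \<open>auto simp: P'_def intro: helly_subset\<close>)
    moreover have "card (point_star P' ` U) < card (point_star P ` U)"
    proof -
      obtain i j where ij: "i \<in> U" "j \<in> U" "point_star P i \<noteq> point_star P j"
        "point_star P' i = point_star P' j"
        using minimal_pair_removal_merges_point_stars[OF less.prems(2-4) B] unfolding P'_def by metis
      have restrict: "point_star P' x = point_star P x - {B, U - B}" for x
        unfolding P'_def point_star_def by auto
      then have "point_star P' ` U = (\<lambda>S. S - {B, U - B}) ` point_star P ` U"
        by (simp add: image_image)
      with ij restrict show ?thesis
        using card_image_less_if_merges[of "point_star P ` U" "point_star P i" "point_star P j"]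
          assms(1) by simp
    qed
    ultimately show ?thesis using card_P' by linarith
  qed
qed

definition complement_pairs :: "'b set \<Rightarrow> 'b set set \<Rightarrow> 'b set set" where
  "complement_pairs U F = {A \<in> F. U - A \<in> F}"

lemma card_nonempty_proper_subsets:
  assumes "finite U" "U \<noteq> {}"
  shows "card {A. A \<subseteq> U \<and> A \<noteq> {} \<and> A \<noteq> U} = 2 ^ card U - 2"
proof -
  have "{A. A \<subseteq> U \<and> A \<noteq> {} \<and> A \<noteq> U} = Pow U - {{}, U}" by auto
  moreover have "{{}, U} \<subseteq> Pow U" "card {{}, U} = 2" using assms(2) by auto
  ultimately show ?thesis using assms(1) by (simp add: card_Diff_subset card_Pow)
qed

lemma card_plus_card_unpaired_le:
  assumes "finite U" "U \<noteq> {}" "\<forall>A\<in>F. A \<subseteq> U \<and> A \<noteq> {} \<and> A \<noteq> U"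
  shows "card F + card (F - complement_pairs U F) \<le> 2 ^ card U - 2"
    and "card F + card (F - complement_pairs U F) = 2 ^ card U - 2 \<Longrightarrow>
      X \<subseteq> U \<Longrightarrow> X \<noteq> {} \<Longrightarrow> X \<noteq> U \<Longrightarrow> X \<in> F \<or> U - X \<in> F"
proof -
  define N where "N = {A. A \<subseteq> U \<and> A \<noteq> {} \<and> A \<noteq> U}"
  define Q where "Q = F - complement_pairs U F"
  have "finite N" unfolding N_def using assms(1) by simp
  have "F \<subseteq> N" unfolding N_def using assms(3) by blast
  then have "finite F" "finite Q" using \<open>finite N\<close> finite_subset unfolding Q_def by auto
  have "inj_on (\<lambda>A. U - A) Q" unfolding Q_def inj_on_def using assms(3) by blast
  moreover have "F \<inter> (\<lambda>A. U - A) ` Q = {}" unfolding Q_def complement_pairs_def by auto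
  ultimately have card_union: "card (F \<union> (\<lambda>A. U - A) ` Q) = card F + card Q"
    using \<open>finite F\<close> \<open>finite Q\<close> by (simp add: card_Un_disjoint card_image)
  have union_sub: "F \<union> (\<lambda>A. U - A) ` Q \<subseteq> N"
    using \<open>F \<subseteq> N\<close> assms(3) unfolding N_def Q_def by auto
  have card_N: "card N = 2 ^ card U - 2"
    unfolding N_def using card_nonempty_proper_subsets[OF assms(1,2)] .
  show "card F + card Q \<le> 2 ^ card U - 2"
    using card_mono[OF \<open>finite N\<close> union_sub] card_union card_N by simp
  assume "card F + card Q = 2 ^ card U - 2" "X \<subseteq> U" "X \<noteq> {}" "X \<noteq> U"
  then have "X \<in> F \<union> (\<lambda>A. U - A) ` Q"
    using card_subset_eq[OF \<open>finite N\<close> union_sub] card_union card_N unfolding N_def by auto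
  then consider "X \<in> F" | A where "A \<in> F" "X = U - A" unfolding Q_def by blast
  then show "X \<in> F \<or> U - X \<in> F"
    by cases (use assms(3) in \<open>auto simp: double_diff\<close>)
qed

lemma card_complement_pairs_le:
  assumes "finite U" "U \<noteq> {}" "\<forall>A\<in>F. A \<subseteq> U \<and> A \<noteq> {}" "helly F"
  shows "card (complement_pairs U F) + 2 \<le> 2 * card U"
    and "card (complement_pairs U F) + 2 = 2 * card U \<Longrightarrow> b \<in> U \<Longrightarrow> c \<in> U \<Longrightarrow> b \<noteq> c \<Longrightarrow>
      \<exists>A\<in>complement_pairs U F. b \<in> A \<and> c \<notin> A"
proof -
  define P where "P = complement_pairs U F"
  have closed: "\<forall>A\<in>P. U - A \<in> P"
    unfolding P_def complement_pairs_def using assms(3) by (auto simp: double_diff)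
  have "finite P" unfolding P_def complement_pairs_def
    using assms(1,3) by (auto intro: finite_subset[of _ "Pow U"])
  then have stars: "card P + 2 \<le> 2 * card (point_star P ` U)"
    using complement_closed_helly_card_le[OF assms(1,2)] closed assms(3,4)
    unfolding P_def complement_pairs_def by (auto intro: helly_subset)
  moreover have "card (point_star P ` U) \<le> card U" using assms(1) card_image_le by blast
  ultimately show "card P + 2 \<le> 2 * card U" by linarith
  assume "card P + 2 = 2 * card U" "b \<in> U" "c \<in> U" "b \<noteq> c"
  then have "card (point_star P ` U) = card U"
    using stars card_image_le[OF assms(1), of "point_star P"] by linarith
  then have "inj_on (point_star P) U" using inj_on_iff_eq_card[OF assms(1)] by blast
  then obtain A where "A \<in> P" "b \<in> A \<longleftrightarrow> c \<notin> A"
    using \<open>b \<in> U\<close> \<open>c \<in> U\<close> \<open>b \<noteq> c\<close> unfolding inj_on_def point_star_def by blast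
  then show "\<exists>A\<in>P. b \<in> A \<and> c \<notin> A"
    using closed \<open>b \<in> U\<close> \<open>c \<in> U\<close> by (metis Diff_iff)
qed

locale saturated_helly_family =
  fixes U :: "'b set" and F :: "'b set set"
  assumes finite_U: "finite U"
    and nonempty_U: "U \<noteq> {}"
    and helly_F: "helly F"
    and proper_members: "A \<in> F \<Longrightarrow> A \<subseteq> U \<and> A \<noteq> {} \<and> A \<noteq> U"
    and saturated: "X \<subseteq> U \<Longrightarrow> X \<noteq> {} \<Longrightarrow> X \<noteq> U \<Longrightarrow> X \<in> F \<or> U - X \<in> F"
    and separating: "b \<in> U \<Longrightarrow> c \<in> U \<Longrightarrow> b \<noteq> c \<Longrightarrow> \<exists>A\<in>complement_pairs U F. b \<in> A \<and> c \<notin> A"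

theorem card_helly_family_le:
  assumes "finite U" "U \<noteq> {}" "\<forall>A\<in>F. A \<subseteq> U \<and> A \<noteq> {} \<and> A \<noteq> U" "helly F"
  shows "card F \<le> 2 ^ (card U - 1) + card U - 2"
    and "card F = 2 ^ (card U - 1) + card U - 2 \<Longrightarrow> saturated_helly_family U F"
proof -
  define P where "P = complement_pairs U F"
  have "finite F" using assms(1,3) by (auto intro: finite_subset[of _ "Pow U"])
  moreover have "P \<subseteq> F" unfolding P_def complement_pairs_def by blast
  ultimately have card_F: "card F = card P + card (F - P)"
    by (metis card_Diff_subset card_mono finite_subset le_add_diff_inverse)
  note unpaired = card_plus_card_unpaired_le[OF assms(1-3), folded P_def]
  have "\<forall>A\<in>F. A \<subseteq> U \<and> A \<noteq> {}" using assms(3) by blast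
  note pairs = card_complement_pairs_le[OF assms(1,2) this assms(4), folded P_def]
  have power: "(2::nat) ^ card U = 2 * 2 ^ (card U - 1)" "card U \<ge> 1" "2 ^ (card U - 1) \<ge> (1::nat)"
    using assms(1,2) by (simp_all add: card_gt_0_iff Suc_leI flip: power_Suc)
  then show "card F \<le> 2 ^ (card U - 1) + card U - 2"
    using card_F unpaired(1) pairs(1) by linarith
  assume "card F = 2 ^ (card U - 1) + card U - 2"
  then have "card F + card (F - P) = 2 ^ card U - 2" "card P + 2 = 2 * card U"
    using card_F unpaired(1) pairs(1) power by linarith+
  then show "saturated_helly_family U F"
    using assms unpaired(2) pairs(2) unfolding P_def by unfold_locales auto
qed

context saturated_helly_family
begin

lemma complement_pairs_Diff:
  assumes "A \<in> complement_pairs U F"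
  shows "U - A \<in> complement_pairs U F" "A \<subseteq> U"
proof -
  show "A \<subseteq> U" using assms proper_members unfolding complement_pairs_def by blast
  then show "U - A \<in> complement_pairs U F"
    using assms unfolding complement_pairs_def by (simp add: double_diff)
qed

lemma no_crossing:
  assumes "A \<in> F" "B \<in> complement_pairs U F" "A \<inter> B \<noteq> {}" "U - (A \<union> B) \<noteq> {}"
  shows "A \<subseteq> B \<or> B \<subseteq> A"
proof (rule ccontr)
  assume "\<not> (A \<subseteq> B \<or> B \<subseteq> A)"
  then have "A - B \<noteq> {}" "B - A \<noteq> {}" by auto
  have "A \<subseteq> U" "B \<subseteq> U" "B \<in> F" "U - B \<in> F" using assms(1,2) proper_members
    unfolding complement_pairs_def by auto
  define X where "X = (A \<inter> B) \<union> (U - (A \<union> B))"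
  have "X \<subseteq> U" "X \<noteq> {}" "X \<noteq> U"
    unfolding X_def using \<open>A \<subseteq> U\<close> assms(3) \<open>A - B \<noteq> {}\<close> by auto
  then consider "X \<in> F" | "U - X \<in> F" using saturated by blast
  then show False
  proof cases
    case 1
    have "X \<inter> A \<inter> (U - B) \<noteq> {}"
      by (rule helly_triple[OF helly_F 1 assms(1) \<open>U - B \<in> F\<close>])
        (use assms(3,4) \<open>A - B \<noteq> {}\<close> \<open>A \<subseteq> U\<close> in \<open>auto simp: X_def\<close>)
    then show False unfolding X_def by blast
  next
    case 2
    have "(U - X) \<inter> A \<inter> B \<noteq> {}"
      by (rule helly_triple[OF helly_F 2 assms(1) \<open>B \<in> F\<close>])
        (use assms(3) \<open>A - B \<noteq> {}\<close> \<open>B - A \<noteq> {}\<close> \<open>A \<subseteq> U\<close> \<open>B \<subseteq> U\<close> in \<open>auto simp: X_def\<close>)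
    then show False unfolding X_def by blast
  qed
qed

lemma pairs_through_point_nested:
  assumes "A \<in> complement_pairs U F" "A' \<in> complement_pairs U F" "b \<in> A \<inter> A'" "c \<in> U - (A \<union> A')"
  shows "A \<subseteq> A' \<or> A' \<subseteq> A"
  using no_crossing[of A A'] assms unfolding complement_pairs_def by blast

lemma pair_through_unpaired_point_disjoint:
  assumes "b \<in> U" "{b} \<notin> complement_pairs U F" "Y \<in> F" "b \<notin> Y"
  obtains A where "A \<in> complement_pairs U F" "b \<in> A" "A \<noteq> {b}" "A \<inter> Y = {}"
proof -
  define W where "W = {A \<in> complement_pairs U F. b \<in> A \<and> A \<noteq> {b}}"
  have "\<exists>A\<in>W. A \<inter> Y = {}"
  proof (rule ccontr)
    assume "\<not> (\<exists>A\<in>W. A \<inter> Y = {})"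
    then have meets: "A \<inter> Y \<noteq> {}" if "A \<in> W" for A using that by blast
    obtain y where y: "y \<in> Y" "\<And>A. A \<in> W \<Longrightarrow> y \<in> A"
    proof (rule helly_insertE[OF helly_F _ assms(3)])
      show "W \<subseteq> F" unfolding W_def complement_pairs_def by blast
      show "Y \<noteq> {}" using proper_members[OF assms(3)] by blast
      show "A \<inter> B \<noteq> {}" if "A \<in> W" "B \<in> W" for A B using that unfolding W_def by blast
      show "A \<inter> Y \<noteq> {}" if "A \<in> W" for A using meets that .
    qed blast
    then have "y \<in> U" "b \<noteq> y" using proper_members[OF assms(3)] assms(4) by auto
    then obtain A where "A \<in> complement_pairs U F" "b \<in> A" "y \<notin> A"
      using separating assms(1) by blast
    moreover have "A \<noteq> {b}" using \<open>A \<in> complement_pairs U F\<close> assms(2) by blast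
    ultimately show False using y(2) unfolding W_def by blast
  qed
  then show thesis using that unfolding W_def by blast
qed

text \<open>If \<open>b \<noteq> c\<close> were both unpaired, let \<open>A\<^sub>0\<close> be a minimal pair containing \<open>b\<close> but not \<open>c\<close>.
  Neither \<open>X = U - ({c} \<union> (A\<^sub>0 - {b}))\<close> nor its complement can then be a member.\<close>
lemma unpaired_singleton_unique:
  assumes "b \<in> U" "{b} \<notin> complement_pairs U F" "c \<in> U" "{c} \<notin> complement_pairs U F"
  shows "b = c"
proof (rule ccontr)
  assume "b \<noteq> c"
  define \<alpha> where "\<alpha> = {A \<in> complement_pairs U F. b \<in> A \<and> c \<notin> A}"
  have "\<alpha> \<subseteq> Pow U" unfolding \<alpha>_def using complement_pairs_Diff(2) by blast
  then have "finite \<alpha>" using finite_U by (simp add: finite_subset)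
  moreover have "\<alpha> \<noteq> {}" using separating[OF assms(1,3) \<open>b \<noteq> c\<close>] unfolding \<alpha>_def by blast
  ultimately obtain A\<^sub>0 where A\<^sub>0: "A\<^sub>0 \<in> \<alpha>" and minimal: "\<forall>A\<in>\<alpha>. A \<subseteq> A\<^sub>0 \<longrightarrow> A\<^sub>0 = A"
    using finite_has_minimal by blast
  have least: "A\<^sub>0 \<subseteq> A" if "A \<in> \<alpha>" for A
  proof -
    have "A\<^sub>0 \<subseteq> A \<or> A \<subseteq> A\<^sub>0"
      by (rule pairs_through_point_nested) (use A\<^sub>0 that assms(3) in \<open>auto simp: \<alpha>_def\<close>)
    then show ?thesis using minimal that by blast
  qed
  define T where "T = A\<^sub>0 - {b}"
  have "A\<^sub>0 \<in> complement_pairs U F" "b \<in> A\<^sub>0" using A\<^sub>0 unfolding \<alpha>_def by auto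
  then have "A\<^sub>0 \<noteq> {b}" "A\<^sub>0 \<subseteq> U" using assms(2) complement_pairs_Diff(2) by auto
  then have "T \<noteq> {}" "T \<subseteq> U" using \<open>b \<in> A\<^sub>0\<close> unfolding T_def by auto
  define X where "X = U - insert c T"
  have "X \<subseteq> U" "b \<in> X" "c \<notin> X" "U - X = insert c T"
    unfolding X_def using assms(1,3) \<open>b \<noteq> c\<close> \<open>T \<subseteq> U\<close> by (auto simp: T_def)
  then consider "X \<in> F" | "U - X \<in> F" using saturated by blast
  then show False
  proof cases
    case 1
    then obtain A where A: "A \<in> complement_pairs U F" "c \<in> A" "A \<noteq> {c}" "A \<inter> X = {}"
      using pair_through_unpaired_point_disjoint[OF assms(3,4)] \<open>c \<notin> X\<close> by blast
    then have "A \<subseteq> insert c T" using complement_pairs_Diff(2)[OF A(1)] unfolding X_def by blast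
    then have "b \<notin> A" using \<open>b \<noteq> c\<close> unfolding T_def by blast
    then have "U - A \<in> \<alpha>" using complement_pairs_Diff(1)[OF A(1)] A(2) assms(1) unfolding \<alpha>_def by blast
    then have "A \<inter> T = {}" using least unfolding T_def by blast
    then show False using A(2,3) \<open>A \<subseteq> insert c T\<close> by blast
  next
    case 2
    then obtain A where A: "A \<in> complement_pairs U F" "b \<in> A" "A \<noteq> {b}" "A \<inter> (U - X) = {}"
      using pair_through_unpaired_point_disjoint[OF assms(1,2)] \<open>b \<in> X\<close> by blast
    then have "A \<in> \<alpha>" using \<open>U - X = insert c T\<close> unfolding \<alpha>_def by blast
    then show False using least A(4) \<open>T \<noteq> {}\<close> \<open>U - X = insert c T\<close> unfolding T_def by blast
  qed
qed

lemma paired_singletons: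
  obtains x where "x \<in> U" "\<And>j. j \<in> U - {x} \<Longrightarrow> {j} \<in> complement_pairs U F"
  using unpaired_singleton_unique nonempty_U by blast

lemma members_avoiding_point_are_singletons:
  assumes paired: "\<And>j. j \<in> U - {x} \<Longrightarrow> {j} \<in> complement_pairs U F"
    and "x \<in> U" "A \<in> F" "x \<notin> A"
  shows "\<exists>j. A = {j}"
proof (rule ccontr)
  assume "\<nexists>j. A = {j}"
  define W where "W = (\<lambda>i. U - {i}) ` (U - {x})"
  have "A \<subseteq> U" "A \<noteq> {}" using proper_members[OF assms(3)] by auto
  have "W \<subseteq> F" using paired unfolding W_def complement_pairs_def by auto
  moreover have "B \<inter> A \<noteq> {}" if B: "B \<in> W" for B
  proof -
    obtain i where "B = U - {i}" using B unfolding W_def by blast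
    moreover have "A - {i} \<noteq> {}" using \<open>A \<noteq> {}\<close> \<open>\<nexists>j. A = {j}\<close> by auto
    ultimately show ?thesis using \<open>A \<subseteq> U\<close> by blast
  qed
  moreover have "B \<inter> B' \<noteq> {}" if "B \<in> W" "B' \<in> W" for B B'
    using that assms(2) unfolding W_def by blast
  ultimately obtain y where "y \<in> A" "\<And>B. B \<in> W \<Longrightarrow> y \<in> B"
    using helly_insertE[OF helly_F _ assms(3) \<open>A \<noteq> {}\<close>, of W] by metis
  moreover have "U - {y} \<in> W" using \<open>y \<in> A\<close> \<open>A \<subseteq> U\<close> assms(4) unfolding W_def by blast
  ultimately show False by blast
qed

theorem members_eq:
  obtains x where "x \<in> U" "F = (\<lambda>j. {j}) ` (U - {x}) \<union> {A. x \<in> A \<and> A \<subset> U}"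
proof -
  obtain x where x: "x \<in> U" and paired: "\<And>j. j \<in> U - {x} \<Longrightarrow> {j} \<in> complement_pairs U F"
    by (fact paired_singletons)
  have singleton: "\<exists>j. A = {j}" if "A \<in> F" "x \<notin> A" for A
    by (rule members_avoiding_point_are_singletons[OF _ x that]) (rule paired)
  have "F \<subseteq> (\<lambda>j. {j}) ` (U - {x}) \<union> {A. x \<in> A \<and> A \<subset> U}"
  proof
    fix A assume "A \<in> F"
    then show "A \<in> (\<lambda>j. {j}) ` (U - {x}) \<union> {A. x \<in> A \<and> A \<subset> U}"
      using singleton[OF \<open>A \<in> F\<close>] proper_members[OF \<open>A \<in> F\<close>] by blast
  qed
  moreover have "(\<lambda>j. {j}) ` (U - {x}) \<subseteq> F"
    using paired unfolding complement_pairs_def by blast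
  moreover have "A \<in> F" if A: "x \<in> A" "A \<subset> U" for A
  proof -
    consider "A \<in> F" | "U - A \<in> F" using saturated[of A] A by blast
    then show ?thesis
    proof cases
      case 2
      then obtain j where "U - A = {j}" using singleton[OF 2] A(1) by blast
      then have "j \<in> U - {x}" "A = U - {j}" using A by auto
      then show ?thesis using paired unfolding complement_pairs_def by blast
    qed
  qed
  ultimately have "F = (\<lambda>j. {j}) ` (U - {x}) \<union> {A. x \<in> A \<and> A \<subset> U}" by blast
  with x show thesis by (rule that)
qed

end

corollary helly_family_extremal:
  assumes "finite U" "U \<noteq> {}" "\<forall>A\<in>F. A \<subseteq> U \<and> A \<noteq> {} \<and> A \<noteq> U" "helly F"
    and "card F = 2 ^ (card U - 1) + card U - 2"
  obtains x where "x \<in> U" "F = (\<lambda>j. {j}) ` (U - {x}) \<union> {A. x \<in> A \<and> A \<subset> U}"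
  by (rule saturated_helly_family.members_eq[OF card_helly_family_le(2)[OF assms]])

definition maximal_independent_sets :: "'a set \<Rightarrow> ('a \<Rightarrow> 'a \<Rightarrow> bool) \<Rightarrow> 'a set set" where
  "maximal_independent_sets V E = {S. maximal_independent V E S}"

lemma independent_subset_maximal:
  assumes "simple_graph V E" "independent V E S"
  obtains M where "maximal_independent V E M" "S \<subseteq> M"
proof -
  define T where "T = {T. independent V E T \<and> S \<subseteq> T}"
  have "T \<subseteq> Pow V" unfolding T_def independent_def by blast
  then have "finite T" using assms(1) unfolding simple_graph_def by (simp add: finite_subset)
  moreover have "S \<in> T" unfolding T_def using assms(2) by blast
  ultimately obtain M where "M \<in> T" "\<forall>M'\<in>T. M \<subseteq> M' \<longrightarrow> M = M'"
    using finite_has_maximal by blast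
  then have "maximal_independent V E M" "S \<subseteq> M"
    unfolding maximal_independent_def T_def by auto
  then show thesis using that by blast
qed

context
  fixes V :: "'a set" and E :: "'a \<Rightarrow> 'a \<Rightarrow> bool"
  assumes graph: "simple_graph V E"
begin

lemma adjacent_iff_disjoint_point_stars:
  assumes "u \<in> V" "v \<in> V"
  shows "E u v \<longleftrightarrow>
    point_star (maximal_independent_sets V E) u \<inter> point_star (maximal_independent_sets V E) v = {}"
proof
  assume "E u v"
  then show "point_star (maximal_independent_sets V E) u \<inter> point_star (maximal_independent_sets V E) v = {}"
    unfolding point_star_def maximal_independent_sets_def maximal_independent_def independent_def
    by blast
next
  assume disjoint:
    "point_star (maximal_independent_sets V E) u \<inter> point_star (maximal_independent_sets V E) v = {}"
  show "E u v"
  proof (rule ccontr)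
    assume "\<not> E u v"
    then have "independent V E {u, v}"
      using assms graph unfolding independent_def simple_graph_def by auto
    then obtain M where "maximal_independent V E M" "{u, v} \<subseteq> M"
      using independent_subset_maximal[OF graph] by blast
    then show False
      using disjoint unfolding point_star_def maximal_independent_sets_def by blast
  qed
qed

lemma helly_point_stars: "helly (point_star (maximal_independent_sets V E) ` V)"
  unfolding helly_def
proof (intro allI impI)
  fix Q assume Q: "Q \<subseteq> point_star (maximal_independent_sets V E) ` V" "Q \<noteq> {}"
    "\<forall>A\<in>Q. \<forall>B\<in>Q. A \<inter> B \<noteq> {}"
  define W where "W = {v \<in> V. point_star (maximal_independent_sets V E) v \<in> Q}"
  have "independent V E W"
    unfolding independent_def W_def using Q(3) adjacent_iff_disjoint_point_stars by auto
  then obtain M where "maximal_independent V E M" "W \<subseteq> M"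
    using independent_subset_maximal[OF graph] by blast
  then have "M \<in> \<Inter>Q"
    using Q(1) unfolding W_def point_star_def maximal_independent_sets_def by blast
  then show "\<Inter>Q \<noteq> {}" by blast
qed

lemma inj_on_point_stars:
  assumes "twin_free V E"
  shows "inj_on (point_star (maximal_independent_sets V E)) V"
proof (rule inj_onI)
  fix u v
  assume "u \<in> V" "v \<in> V"
    and "point_star (maximal_independent_sets V E) u = point_star (maximal_independent_sets V E) v"
  then have "nbhd V E u = nbhd V E v"
    unfolding nbhd_def using adjacent_iff_disjoint_point_stars by auto
  then show "u = v" using assms \<open>u \<in> V\<close> \<open>v \<in> V\<close> unfolding twin_free_def by blast
qed

lemma point_star_proper:
  assumes "v \<in> V" "E v u"
  shows "point_star (maximal_independent_sets V E) v \<noteq> {}"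
    and "point_star (maximal_independent_sets V E) v \<noteq> maximal_independent_sets V E"
proof -
  have "u \<in> V" "\<not> E w w" for w using assms(2) graph unfolding simple_graph_def by auto
  then have nonempty: "point_star (maximal_independent_sets V E) w \<noteq> {}" if "w \<in> V" for w
    using adjacent_iff_disjoint_point_stars[OF that that] by auto
  show "point_star (maximal_independent_sets V E) v \<noteq> {}" using nonempty[OF assms(1)] .
  show "point_star (maximal_independent_sets V E) v \<noteq> maximal_independent_sets V E"
    using adjacent_iff_disjoint_point_stars[OF assms(1) \<open>u \<in> V\<close>] assms(2) nonempty[OF \<open>u \<in> V\<close>]
    unfolding point_star_def by blast
qed

lemma connected_has_neighbour:
  assumes "connected_graph V E" "i_max V E \<noteq> 1" "v \<in> V"
  obtains u where "E v u"
proof -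
  have "\<exists>u. E v u"
  proof (rule ccontr)
    assume isolated: "\<nexists>u. E v u"
    have "w = v" if "w \<in> V" for w
    proof -
      have "E\<^sup>*\<^sup>* v w" using assms(1,3) that unfolding connected_graph_def by blast
      then show "w = v" by (cases rule: converse_rtranclpE) (use isolated in auto)
    qed
    then have "V = {v}" using assms(3) by blast
    then have "independent V E S \<longleftrightarrow> S \<subseteq> {v}" for S
      using isolated unfolding independent_def by auto
    then have "maximal_independent V E S \<longleftrightarrow> S = {v}" for S
      unfolding maximal_independent_def by blast
    then have "maximal_independent_sets V E = {{v}}" unfolding maximal_independent_sets_def by auto
    then show False using assms(2) unfolding i_max_def maximal_independent_sets_def by simp
  qed
  then show thesis using that by blast
qed


lemma point_stars_proper:
  assumes "connected_graph V E" "i_max V E \<noteq> 1"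
  shows "\<forall>A\<in>point_star (maximal_independent_sets V E) ` V.
    A \<subseteq> maximal_independent_sets V E \<and> A \<noteq> {} \<and> A \<noteq> maximal_independent_sets V E"
proof
  fix A assume "A \<in> point_star (maximal_independent_sets V E) ` V"
  then obtain v u where "v \<in> V" "A = point_star (maximal_independent_sets V E) v" "E v u"
    using connected_has_neighbour[OF assms] by blast
  then show "A \<subseteq> maximal_independent_sets V E \<and> A \<noteq> {} \<and> A \<noteq> maximal_independent_sets V E"
    using point_star_proper unfolding point_star_def by blast
qed

end

context
  fixes V :: "'a set" and E :: "'a \<Rightarrow> 'a \<Rightarrow> bool" and \<sigma> :: "'a \<Rightarrow> 'b set"
    and U :: "'b set" and x :: 'b and C :: "'a set"
  assumes inj: "inj_on \<sigma> V"
    and adjacent: "\<forall>u\<in>V. \<forall>v\<in>V. E u v \<longleftrightarrow> \<sigma> u \<inter> \<sigma> v = {}"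
    and point: "x \<in> U"
    and family: "\<sigma> ` V = (\<lambda>j. {j}) ` (U - {x}) \<union> {A. x \<in> A \<and> A \<subset> U}"
    and C_def: "C = {v \<in> V. x \<notin> \<sigma> v}"
begin

lemma image_singleton_part: "\<sigma> ` C = (\<lambda>j. {j}) ` (U - {x})"
proof -
  have "\<sigma> ` C = {A \<in> \<sigma> ` V. x \<notin> A}" unfolding C_def by blast
  also have "\<dots> = (\<lambda>j. {j}) ` (U - {x})" unfolding family by blast
  finally show ?thesis .
qed

lemma singleton_part_star: "u \<in> C \<Longrightarrow> \<exists>j\<in>U - {x}. \<sigma> u = {j}"
  using image_singleton_part by blast

lemma star_outside_singleton_part:
  assumes "v \<in> V - C"
  shows "x \<in> \<sigma> v" "\<sigma> v \<subset> U"
proof -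
  show "x \<in> \<sigma> v" using assms unfolding C_def by blast
  moreover have "\<sigma> v \<in> \<sigma> ` V" using assms by blast
  then have "\<sigma> v \<in> (\<lambda>j. {j}) ` (U - {x}) \<union> {A. x \<in> A \<and> A \<subset> U}" unfolding family .
  ultimately show "\<sigma> v \<subset> U" by auto
qed

lemma singleton_part_clique: "clique V E C"
  unfolding clique_def
proof (intro conjI ballI impI)
  show "C \<subseteq> V" unfolding C_def by blast
  fix u v assume "u \<in> C" "v \<in> C" "u \<noteq> v"
  then have "\<sigma> u \<noteq> \<sigma> v" using inj \<open>C \<subseteq> V\<close> unfolding inj_on_def by blast
  moreover obtain i j where "\<sigma> u = {i}" "\<sigma> v = {j}"
    using singleton_part_star[OF \<open>u \<in> C\<close>] singleton_part_star[OF \<open>v \<in> C\<close>] by blast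
  ultimately have "\<sigma> u \<inter> \<sigma> v = {}" by auto
  then show "E u v" using adjacent \<open>u \<in> C\<close> \<open>v \<in> C\<close> \<open>C \<subseteq> V\<close> by blast
qed

lemma nbhd_outside_singleton_part:
  assumes "v \<in> V - C"
  shows "nbhd V E v = {u \<in> C. \<sigma> u \<inter> \<sigma> v = {}}"
  using assms star_outside_singleton_part[OF assms] adjacent unfolding nbhd_def C_def by blast

lemma nbhd_outside_singleton_part_nonempty:
  assumes "v \<in> V - C"
  shows "nbhd V E v \<noteq> {}"
proof -
  obtain j where "j \<in> U - \<sigma> v" using star_outside_singleton_part[OF assms] by blast
  moreover have "j \<noteq> x" using \<open>j \<in> U - \<sigma> v\<close> star_outside_singleton_part[OF assms] by blast
  ultimately have "{j} \<in> \<sigma> ` V" unfolding family by blast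
  then obtain u where "u \<in> V" "\<sigma> u = {j}" by blast
  then have "u \<in> C" "\<sigma> u \<inter> \<sigma> v = {}"
    using \<open>j \<noteq> x\<close> \<open>j \<in> U - \<sigma> v\<close> unfolding C_def by auto
  then show ?thesis using nbhd_outside_singleton_part[OF assms] by blast
qed

lemma subset_singleton_part_is_nbhd:
  assumes "S \<subseteq> C" "S \<noteq> {}"
  obtains v where "v \<in> V - C" "nbhd V E v = S"
proof -
  define A where "A = U - \<Union>(\<sigma> ` S)"
  have "x \<in> A" using assms(1) singleton_part_star point unfolding A_def by fastforce
  moreover have "A \<subset> U" using assms singleton_part_star unfolding A_def by fastforce
  ultimately have "A \<in> \<sigma> ` V" unfolding family by blast
  then obtain v where "v \<in> V" "\<sigma> v = A" by blast
  then have "v \<in> V - C" using \<open>x \<in> A\<close> unfolding C_def by blast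
  have "\<sigma> u \<inter> A = {} \<longleftrightarrow> u \<in> S" if u: "u \<in> C" for u
  proof -
    obtain j where j: "\<sigma> u = {j}" "j \<in> U" using singleton_part_star[OF u] by blast
    then have "\<sigma> u \<inter> A = {} \<longleftrightarrow> j \<in> \<Union>(\<sigma> ` S)" unfolding A_def by auto
    also have "\<dots> \<longleftrightarrow> (\<exists>s\<in>S. \<sigma> s = \<sigma> u)" using singleton_part_star assms(1) j(1) by fastforce
    also have "\<dots> \<longleftrightarrow> u \<in> S" using inj_onD[OF inj] u assms(1) unfolding C_def by blast
    finally show ?thesis .
  qed
  then have "nbhd V E v = S"
    using nbhd_outside_singleton_part[OF \<open>v \<in> V - C\<close>] \<open>\<sigma> v = A\<close> assms(1) by blast
  with \<open>v \<in> V - C\<close> show thesis by (rule that)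
qed

end

lemma clique_plus_subsets_if_representation:
  fixes \<sigma> :: "'a \<Rightarrow> 'b set"
  assumes "twin_free V E" "inj_on \<sigma> V"
    and adjacent: "\<forall>u\<in>V. \<forall>v\<in>V. E u v \<longleftrightarrow> \<sigma> u \<inter> \<sigma> v = {}"
    and "finite U" "x \<in> U"
    and family: "\<sigma> ` V = (\<lambda>j. {j}) ` (U - {x}) \<union> {A. x \<in> A \<and> A \<subset> U}"
  shows "clique_plus_subsets (card U) V E"
proof -
  define C where "C = {v \<in> V. x \<notin> \<sigma> v}"
  note representation = assms(2) adjacent assms(5) family C_def
  have "C \<subseteq> V" unfolding C_def by blast
  then have "card C = card (\<sigma> ` C)" using card_image inj_on_subset[OF assms(2)] by metis
  also have "\<dots> = card U - 1"
    using image_singleton_part[OF representation] assms(4,5) by (simp add: card_image)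
  finally have "card C = card U - 1" .
  moreover have "nbhd V E ` (V - C) = {S. S \<subseteq> C \<and> S \<noteq> {}}"
  proof (intro equalityI subsetI)
    fix S assume "S \<in> nbhd V E ` (V - C)"
    then obtain v where v: "v \<in> V - C" "S = nbhd V E v" by blast
    then show "S \<in> {S. S \<subseteq> C \<and> S \<noteq> {}}"
      using nbhd_outside_singleton_part[OF representation v(1)]
        nbhd_outside_singleton_part_nonempty[OF representation v(1)] by blast
  next
    fix S assume "S \<in> {S. S \<subseteq> C \<and> S \<noteq> {}}"
    then have "S \<subseteq> C" "S \<noteq> {}" by auto
    then obtain v where "v \<in> V - C" "nbhd V E v = S"
      by (rule subset_singleton_part_is_nbhd[OF representation])
    then show "S \<in> nbhd V E ` (V - C)" by blast
  qed
  moreover have "inj_on (nbhd V E) (V - C)"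
    using assms(1) unfolding twin_free_def inj_on_def by blast
  ultimately show ?thesis
    using singleton_part_clique[OF representation]
    unfolding clique_plus_subsets_def bij_betw_def by blast
qed

theorem theorem1p2:
  fixes V :: "'a set" and E :: "'a \<Rightarrow> 'a \<Rightarrow> bool" and k :: nat
  assumes "k \<ge> 2"
    and "simple_graph V E"
    and "connected_graph V E"
    and "twin_free V E"
    and "i_max V E = k"
  shows "card V \<le> 2 ^ (k - 1) + k - 2 \<and>
         (card V = 2 ^ (k - 1) + k - 2 \<longrightarrow> clique_plus_subsets k V E)"
proof -
  define M where "M = maximal_independent_sets V E"
  have card_M: "card M = k" using assms(5) unfolding i_max_def M_def maximal_independent_sets_def .
  then have "finite M" "M \<noteq> {}" "i_max V E \<noteq> 1" using assms(1,5) by (auto intro: card_ge_0_finite)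
  note proper = point_stars_proper[OF assms(2,3) \<open>i_max V E \<noteq> 1\<close>, folded M_def]
  note helly = helly_point_stars[OF assms(2), folded M_def]
  note inj = inj_on_point_stars[OF assms(2,4), folded M_def]
  have adjacent: "\<forall>u\<in>V. \<forall>v\<in>V. E u v \<longleftrightarrow> point_star M u \<inter> point_star M v = {}"
    using adjacent_iff_disjoint_point_stars[OF assms(2)] unfolding M_def by blast
  have card_V: "card V = card (point_star M ` V)" using inj by (simp add: card_image)
  show ?thesis
  proof (intro conjI impI)
    show "card V \<le> 2 ^ (k - 1) + k - 2"
      using card_helly_family_le(1)[OF \<open>finite M\<close> \<open>M \<noteq> {}\<close> proper helly] card_V card_M by simp
    assume "card V = 2 ^ (k - 1) + k - 2"
    then obtain x where x: "x \<in> M"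
      and family: "point_star M ` V = (\<lambda>j. {j}) ` (M - {x}) \<union> {A. x \<in> A \<and> A \<subset> M}"
      using helly_family_extremal[OF \<open>finite M\<close> \<open>M \<noteq> {}\<close> proper helly] card_V card_M by metis
    show "clique_plus_subsets k V E"
      using clique_plus_subsets_if_representation[OF assms(4) inj adjacent \<open>finite M\<close> x family] card_M
      by simp
  qed
qed

end
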